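(* Let $(M,\circ,e)$ be an $F$-manifold with an invariant metric $\tilde g$ and an eventual identity $\mathcal E$. Define the metric $g$ by $$g(X,Y):=\tilde g(\mathcal E^{-1}\circ X,Y).$$ Then the pair $(g,\tilde g)$ is almost compatible. Equivalently, the Nijenhuis tensor of the endomorphism $A:=g^*\tilde g=\mathcal E\circ(\cdot)$ vanishes identically: $$N_A(X,Y)=-[AX,AY]+A([AX,Y]+[X,AY])-A^2[X,Y]=0.$$
   Context: An $F$-manifold $(M,\circ,e)$ is a smooth manifold $M$ together with a commutative, associative, $C^\infty(M)$-bilinear multiplication $\circ$ on $TM$ with unit vector field $e$, such that $$L_{X\circ Y}(\circ)=X\circ L_Y(\circ)+Y\circ L_X(\circ)$$ for all vector fields $X,Y$. Here $$L_Z(\circ)(X,Y):=[Z,X\circ Y]-[Z,X]\circ Y-X\circ[Z,Y].$$ A vector field $\mathcal E$ is invertible if there is a vector field $\mathcal E^{-1}$ with $\mathcal E\circ\mathcal E^{-1}=e$ everywhere on $M$. An eventual identity on $(M,\circ,e)$ is an invertible vector field $\mathcal E$ such that the multiplication $X*Y:=X\circ Y\circ\mathcal E^{-1}$ defines an $F$-manifold structure on $M$ (its unit is $\mathcal E$). A metric means a non-degenerate symmetric bilinear form on $TM$. A metric $\tilde g$ is invariant if $\tilde g(X\circ Y,Z)=\tilde g(X,Y\circ Z)$ for all $X,Y,Z$. For metrics $g,\tilde g$ let $g^*,\tilde g^*$ be the induced inner products on $T^*M$, and let $g^*,\tilde g^*:T^*M\to TM$ and $g,\tilde g:TM\to T^*M$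 also denote the index-raising and index-lowering isomorphisms. Let $g_\lambda^*:=g^*+\lambda\tilde g^*$, assumed non-degenerate for the constants $\lambda$ considered, and let $g_\lambda$ be the corresponding metric. Let $\nabla,\tilde\nabla,\nabla^\lambda$ be the Levi-Civita connections of $g,\tilde g,g_\lambda$, acting on 1-forms. The pair $(g,\tilde g)$ is almost compatible if $$g_\lambda^*(\nabla^\lambda_X\alpha)=g^*(\nabla_X\alpha)+\lambda\tilde g^*(\tilde\nabla_X\alpha)$$ for all vector fields $X$, 1-forms $\alpha$, and constants $\lambda$. By a result of Mokhov, this holds if and only if the Nijenhuis tensor of $g^*\tilde g\in\mathrm{End}(TM)$ vanishes. *)

theory Defs
  imports "HOL-Analysis.Analysis"
begin

text \<open>Local model: the manifold M is an open set U in real^'n (coordinates).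
  Points and tangent vectors are elements of real^'n.\<close>

definition pderiv_fun :: "'n::finite \<Rightarrow> (real^'n \<Rightarrow> real) \<Rightarrow> real^'n \<Rightarrow> real" where
  "pderiv_fun i f x = deriv (\<lambda>t::real. f (x + t *\<^sub>R axis i 1)) 0"

definition iter_pderiv :: "'n::finite list \<Rightarrow> (real^'n \<Rightarrow> real) \<Rightarrow> real^'n \<Rightarrow> real" where
  "iter_pderiv is f = foldr pderiv_fun is f"

definition smooth_fun :: "(real^'n::finite) set \<Rightarrow> (real^'n \<Rightarrow> real) \<Rightarrow> bool" where
  "smooth_fun U f \<longleftrightarrow> (\<forall>is::'n list. continuous_on U (iter_pderiv is f) \<and>
      (\<forall>x\<in>U. \<forall>i. (\<lambda>t::real. iter_pderiv is f (x + t *\<^sub>R axis i 1)) differentiable (at 0)))"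

definition smooth_vf :: "(real^'n::finite) set \<Rightarrow> (real^'n \<Rightarrow> real^'n) \<Rightarrow> bool" where
  "smooth_vf U X \<longleftrightarrow> (\<forall>k. smooth_fun U (\<lambda>p. X p $ k))"

definition lie :: "(real^'n::finite \<Rightarrow> real^'n) \<Rightarrow> (real^'n \<Rightarrow> real^'n) \<Rightarrow> real^'n \<Rightarrow> real^'n" where
  "lie X Y p = (\<chi> k. (\<Sum>i\<in>UNIV. X p $ i * pderiv_fun i (\<lambda>q. Y q $ k) p
                              - Y p $ i * pderiv_fun i (\<lambda>q. X q $ k) p))"

text \<open>A multiplication on TU is given pointwise: m p x y is the product of tangent vectors x, y at p.\<close>
type_synonym 'n mult = "real^'n \<Rightarrow> real^'n \<Rightarrow> real^'n \<Rightarrow> real^'n"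

definition vmul :: "'n::finite mult \<Rightarrow> (real^'n \<Rightarrow> real^'n) \<Rightarrow> (real^'n \<Rightarrow> real^'n) \<Rightarrow> real^'n \<Rightarrow> real^'n" where
  "vmul m X Y = (\<lambda>p. m p (X p) (Y p))"

definition lie_mult :: "'n::finite mult \<Rightarrow> (real^'n \<Rightarrow> real^'n) \<Rightarrow> (real^'n \<Rightarrow> real^'n)
     \<Rightarrow> (real^'n \<Rightarrow> real^'n) \<Rightarrow> real^'n \<Rightarrow> real^'n" where
  "lie_mult m Z X Y = (\<lambda>p. lie Z (vmul m X Y) p - vmul m (lie Z X) Y p - vmul m X (lie Z Y) p)"

definition F_manifold :: "(real^'n::finite) set \<Rightarrow> 'n mult \<Rightarrow> (real^'n \<Rightarrow> real^'n) \<Rightarrow> bool" where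
  "F_manifold U m e \<longleftrightarrow>
     open U \<and> smooth_vf U e \<and>
     (\<forall>i j. smooth_vf U (\<lambda>p. m p (axis i 1) (axis j 1))) \<and>
     (\<forall>p\<in>U. bilinear (m p) \<and> (\<forall>x y. m p x y = m p y x) \<and>
             (\<forall>x y z. m p (m p x y) z = m p x (m p y z)) \<and> (\<forall>x. m p (e p) x = x)) \<and>
     (\<forall>X Y Z W. smooth_vf U X \<longrightarrow> smooth_vf U Y \<longrightarrow> smooth_vf U Z \<longrightarrow> smooth_vf U W \<longrightarrow>
        (\<forall>p\<in>U. lie_mult m (vmul m X Y) Z W p
                 = m p (X p) (lie_mult m Y Z W p) + m p (Y p) (lie_mult m X Z W p)))"

definition eventual_identity :: "(real^'n::finite) set \<Rightarrow> 'n mult \<Rightarrow> (real^'n \<Rightarrow> real^'n)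
     \<Rightarrow> (real^'n \<Rightarrow> real^'n) \<Rightarrow> bool" where
  "eventual_identity U m e E \<longleftrightarrow> smooth_vf U E \<and>
     (\<exists>Einv. smooth_vf U Einv \<and> (\<forall>p\<in>U. m p (E p) (Einv p) = e p) \<and>
        F_manifold U (\<lambda>p x y. m p (m p x y) (Einv p)) E)"

definition metric :: "(real^'n::finite) set \<Rightarrow> (real^'n \<Rightarrow> real^'n \<Rightarrow> real^'n \<Rightarrow> real) \<Rightarrow> bool" where
  "metric U g \<longleftrightarrow> (\<forall>i j. smooth_fun U (\<lambda>p. g p (axis i 1) (axis j 1))) \<and>
     (\<forall>p\<in>U. bilinear (g p) \<and> (\<forall>x y. g p x y = g p y x) \<and>
             (\<forall>x. (\<forall>y. g p x y = 0) \<longrightarrow> x = 0))"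

definition invariant_metric :: "(real^'n::finite) set \<Rightarrow> 'n mult \<Rightarrow> (real^'n \<Rightarrow> real^'n \<Rightarrow> real^'n \<Rightarrow> real) \<Rightarrow> bool" where
  "invariant_metric U m g \<longleftrightarrow> metric U g \<and> (\<forall>p\<in>U. \<forall>x y z. g p (m p x y) z = g p x (m p y z))"

text \<open>The endomorphism g^* gt of TM: (g^* gt)(x) is the unique v with g(v,y) = gt(x,y) for all y.\<close>
definition raise_lower :: "(real^'n::finite \<Rightarrow> real^'n \<Rightarrow> real^'n \<Rightarrow> real) \<Rightarrow> (real^'n \<Rightarrow> real^'n \<Rightarrow> real^'n \<Rightarrow> real)
     \<Rightarrow> real^'n \<Rightarrow> real^'n \<Rightarrow> real^'n" where
  "raise_lower g gt p x = (THE v. \<forall>y. g p v y = gt p x y)"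

definition nijenhuis :: "(real^'n::finite \<Rightarrow> real^'n \<Rightarrow> real^'n) \<Rightarrow> (real^'n \<Rightarrow> real^'n)
     \<Rightarrow> (real^'n \<Rightarrow> real^'n) \<Rightarrow> real^'n \<Rightarrow> real^'n" where
  "nijenhuis A X Y p =
     (let AX = (\<lambda>q. A q (X q)); AY = (\<lambda>q. A q (Y q)) in
       - lie AX AY p + A p (lie AX Y p + lie X AY p) - A p (A p (lie X Y p)))"

end

theory Submission
  imports Defs
begin

text \<open>
  Since \<open>E\<close> is the unit of \<open>X * Y = X \<circ> Y \<circ> E\<^sup>-\<^sup>1\<close>, the F-identity for \<open>*\<close> applied to
  \<open>E * E = E\<close> gives \<open>L\<^sub>E(*) = 2 L\<^sub>E(*)\<close>, so \<open>L\<^sub>E(*) = 0\<close>. Evaluated on \<open>(E \<circ> E, W)\<close> this says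
  that \<open>L\<^sub>E(\<circ>)(E, \<cdot>)\<close> is multiplication by the vector field \<open>[E, E \<circ> E] \<circ> E\<^sup>-\<^sup>1\<close>. Feeding
  this into the F-identity \<open>L\<^sub>E\<^sub>\<circ>\<^sub>X(\<circ>)(E, Y) = E \<circ> L\<^sub>X(\<circ>)(E, Y) + X \<circ> L\<^sub>E(\<circ>)(E, Y)\<close> for \<open>\<circ>\<close>
  itself, all terms except the Nijenhuis tensor of \<open>A = E \<circ> (\<cdot>)\<close> cancel.
  The metric \<open>g = g\<^sup>~(E\<^sup>-\<^sup>1 \<circ> \<cdot>, \<cdot>)\<close> is symmetric by invariance of \<open>g\<^sup>~\<close>, and \<open>g\<^sup>* g\<^sup>~ = A\<close>
  because \<open>g(E \<circ> x, y) = g\<^sup>~(x, y)\<close>.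
\<close>

definition axis_differentiable_on :: "(real^'n::finite) set \<Rightarrow> (real^'n \<Rightarrow> real) \<Rightarrow> bool" where
  "axis_differentiable_on U f \<longleftrightarrow> continuous_on U f \<and>
      (\<forall>x\<in>U. \<forall>i. (\<lambda>t::real. f (x + t *\<^sub>R axis i 1)) differentiable (at 0))"

definition smooth_upto :: "nat \<Rightarrow> (real^'n::finite) set \<Rightarrow> (real^'n \<Rightarrow> real) \<Rightarrow> bool" where
  "smooth_upto n U f \<longleftrightarrow> (\<forall>is::'n list. length is \<le> n \<longrightarrow> axis_differentiable_on U (iter_pderiv is f))"

lemma iter_pderiv_Nil [simp]: "iter_pderiv [] f = f"
  by (simp add: iter_pderiv_def)

lemma iter_pderiv_Cons: "iter_pderiv (i # is) f = pderiv_fun i (iter_pderiv is f)"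
  by (simp add: iter_pderiv_def)

lemma iter_pderiv_snoc: "iter_pderiv (is @ [i]) f = iter_pderiv is (pderiv_fun i f)"
  by (simp add: iter_pderiv_def)

lemma smooth_fun_iff_smooth_upto: "smooth_fun U f \<longleftrightarrow> (\<forall>n. smooth_upto n U f)"
  unfolding smooth_fun_def smooth_upto_def axis_differentiable_on_def by blast

lemma smooth_upto_0: "smooth_upto 0 U f \<longleftrightarrow> axis_differentiable_on U f"
  unfolding smooth_upto_def by simp

lemma smooth_upto_Suc:
  "smooth_upto (Suc n) U f \<longleftrightarrow> axis_differentiable_on U f \<and> (\<forall>i. smooth_upto n U (pderiv_fun i f))"
proof
  assume f: "smooth_upto (Suc n) U f"
  show "axis_differentiable_on U f \<and> (\<forall>i. smooth_upto n U (pderiv_fun i f))"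
    using f[unfolded smooth_upto_def, rule_format, of "[]"]
      f[unfolded smooth_upto_def, rule_format, of "_ @ [_]"]
    by (auto simp: smooth_upto_def iter_pderiv_snoc)
next
  assume f: "axis_differentiable_on U f \<and> (\<forall>i. smooth_upto n U (pderiv_fun i f))"
  show "smooth_upto (Suc n) U f"
    unfolding smooth_upto_def
  proof (intro allI impI)
    fix "is" :: "'a list"
    assume "length is \<le> Suc n"
    then show "axis_differentiable_on U (iter_pderiv is f)"
      using f by (cases "is" rule: rev_exhaust) (auto simp: smooth_upto_def iter_pderiv_snoc)
  qed
qed

lemma smooth_upto_Suc_imp: "smooth_upto (Suc n) U f \<Longrightarrow> smooth_upto n U f"
  unfolding smooth_upto_def by simp

lemma smooth_upto_imp_axis_differentiable_on: "smooth_upto n U f \<Longrightarrow> axis_differentiable_on U f"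
  unfolding smooth_upto_def by (metis iter_pderiv_Nil le0 list.size(3))

lemma eventually_line_in_open:
  fixes x a :: "'a::real_normed_vector"
  assumes "open U" "x \<in> U"
  shows "\<forall>\<^sub>F t in nhds 0. x + t *\<^sub>R a \<in> U"
proof -
  have "open ((\<lambda>t::real. x + t *\<^sub>R a) -` U)"
    using assms(1) by (intro open_vimage continuous_intros)
  then show ?thesis
    using assms(2) eventually_nhds_in_open by fastforce
qed

lemma pderiv_fun_cong_on:
  assumes "open U" "x \<in> U" "\<forall>y\<in>U. f y = g y"
  shows "pderiv_fun i f x = pderiv_fun i g x"
  unfolding pderiv_fun_def
  by (rule deriv_cong_ev)
    (use eventually_mono[OF eventually_line_in_open[OF assms(1,2), of "axis i 1"]] assms(3) in auto)

lemma axis_differentiable_on_cong: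
  assumes "open U" "\<forall>y\<in>U. f y = g y" "axis_differentiable_on U f"
  shows "axis_differentiable_on U g"
  unfolding axis_differentiable_on_def
proof (intro conjI ballI allI)
  show "continuous_on U g"
    using assms continuous_on_cong unfolding axis_differentiable_on_def by blast
next
  fix x i
  assume x: "x \<in> U"
  have ev: "\<forall>\<^sub>F t in nhds 0. f (x + t *\<^sub>R axis i 1) = g (x + t *\<^sub>R axis i 1)"
    using eventually_mono[OF eventually_line_in_open[OF assms(1) x, of "axis i 1"]] assms(2) by auto
  obtain D where "((\<lambda>t. f (x + t *\<^sub>R axis i 1)) has_field_derivative D) (at 0)"
    using assms(3) x unfolding axis_differentiable_on_def
    by (blast dest: DERIV_deriv_iff_real_differentiable[THEN iffD2])
  then have "((\<lambda>t. g (x + t *\<^sub>R axis i 1)) has_field_derivative D) (at 0)"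
    using DERIV_cong_ev[OF refl ev refl] by blast
  then show "(\<lambda>t. g (x + t *\<^sub>R axis i 1)) differentiable (at 0)"
    using real_differentiable_def by blast
qed

lemma iter_pderiv_cong_on:
  assumes "open U" "\<forall>y\<in>U. f y = g y"
  shows "\<forall>y\<in>U. iter_pderiv is f y = iter_pderiv is g y"
  by (induction "is") (auto simp: assms(2) iter_pderiv_Cons intro: pderiv_fun_cong_on[OF assms(1)])

lemma smooth_upto_cong:
  "open U \<Longrightarrow> \<forall>y\<in>U. f y = g y \<Longrightarrow> smooth_upto n U f \<Longrightarrow> smooth_upto n U g"
  unfolding smooth_upto_def by (metis axis_differentiable_on_cong iter_pderiv_cong_on)

lemma smooth_fun_cong:
  "open U \<Longrightarrow> \<forall>y\<in>U. f y = g y \<Longrightarrow> smooth_fun U f \<Longrightarrow> smooth_fun U g"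
  by (metis smooth_fun_iff_smooth_upto smooth_upto_cong)

lemma has_pderiv_fun:
  "axis_differentiable_on U f \<Longrightarrow> x \<in> U \<Longrightarrow>
    ((\<lambda>t. f (x + t *\<^sub>R axis i 1)) has_field_derivative pderiv_fun i f x) (at 0)"
  unfolding axis_differentiable_on_def pderiv_fun_def
  by (simp add: DERIV_deriv_iff_real_differentiable)

lemma pderiv_funI:
  "((\<lambda>t. f (x + t *\<^sub>R axis i 1)) has_field_derivative D) (at 0) \<Longrightarrow> pderiv_fun i f x = D"
  unfolding pderiv_fun_def by (rule DERIV_imp_deriv)

lemma pderiv_fun_add:
  assumes "axis_differentiable_on U f" "axis_differentiable_on U g" "x \<in> U"
  shows "pderiv_fun i (\<lambda>y. f y + g y) x = pderiv_fun i f x + pderiv_fun i g x"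
  using DERIV_add[OF has_pderiv_fun[OF assms(1,3), where i=i] has_pderiv_fun[OF assms(2,3), where i=i]]
  by (rule pderiv_funI)

lemma pderiv_fun_mult:
  assumes "axis_differentiable_on U f" "axis_differentiable_on U g" "x \<in> U"
  shows "pderiv_fun i (\<lambda>y. f y * g y) x = pderiv_fun i f x * g x + f x * pderiv_fun i g x"
  using DERIV_mult[OF has_pderiv_fun[OF assms(1,3), where i=i] has_pderiv_fun[OF assms(2,3), where i=i]]
  by (intro pderiv_funI) (simp add: mult.commute)

lemma pderiv_fun_const [simp]: "pderiv_fun i (\<lambda>y. c) = (\<lambda>y. 0)"
  unfolding pderiv_fun_def by simp

lemma axis_differentiable_on_add:
  "axis_differentiable_on U f \<Longrightarrow> axis_differentiable_on U g \<Longrightarrow> axis_differentiable_on U (\<lambda>y. f y + g y)"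
  unfolding axis_differentiable_on_def by (auto intro!: continuous_on_add differentiable_add)

lemma axis_differentiable_on_mult:
  "axis_differentiable_on U f \<Longrightarrow> axis_differentiable_on U g \<Longrightarrow> axis_differentiable_on U (\<lambda>y. f y * g y)"
  unfolding axis_differentiable_on_def by (auto intro!: continuous_on_mult differentiable_mult)

lemma smooth_upto_add:
  "open U \<Longrightarrow> smooth_upto n U f \<Longrightarrow> smooth_upto n U g \<Longrightarrow> smooth_upto n U (\<lambda>y. f y + g y)"
proof (induction n arbitrary: f g)
  case 0
  then show ?case by (simp add: smooth_upto_0 axis_differentiable_on_add)
next
  case (Suc n)
  have f: "axis_differentiable_on U f" and g: "axis_differentiable_on U g"
    using Suc.prems smooth_upto_imp_axis_differentiable_on by blast+
  have "smooth_upto n U (pderiv_fun i (\<lambda>y. f y + g y))" for i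
    using Suc by (auto simp: smooth_upto_Suc pderiv_fun_add[OF f g] intro: smooth_upto_cong)
  then show ?case
    using f g by (simp add: smooth_upto_Suc axis_differentiable_on_add)
qed

lemma smooth_upto_mult:
  "open U \<Longrightarrow> smooth_upto n U f \<Longrightarrow> smooth_upto n U g \<Longrightarrow> smooth_upto n U (\<lambda>y. f y * g y)"
proof (induction n arbitrary: f g)
  case 0
  then show ?case by (simp add: smooth_upto_0 axis_differentiable_on_mult)
next
  case (Suc n)
  have f: "axis_differentiable_on U f" and g: "axis_differentiable_on U g"
    using Suc.prems smooth_upto_imp_axis_differentiable_on by blast+
  have "smooth_upto n U (\<lambda>y. pderiv_fun i f y * g y)" for i
    using Suc.IH[OF Suc.prems(1)] Suc.prems(2) smooth_upto_Suc_imp[OF Suc.prems(3)]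
    by (simp add: smooth_upto_Suc)
  moreover have "smooth_upto n U (\<lambda>y. f y * pderiv_fun i g y)" for i
    using Suc.IH[OF Suc.prems(1)] Suc.prems(3) smooth_upto_Suc_imp[OF Suc.prems(2)]
    by (simp add: smooth_upto_Suc)
  ultimately have "smooth_upto n U (\<lambda>y. pderiv_fun i f y * g y + f y * pderiv_fun i g y)" for i
    using Suc.prems(1) by (simp add: smooth_upto_add)
  then have "smooth_upto n U (pderiv_fun i (\<lambda>y. f y * g y))" for i
    using Suc.prems(1) by (auto simp: pderiv_fun_mult[OF f g] intro: smooth_upto_cong)
  then show ?case
    using f g by (simp add: smooth_upto_Suc axis_differentiable_on_mult)
qed

lemma smooth_upto_const: "smooth_upto n U (\<lambda>y. c)"
  by (induction n arbitrary: c) (simp_all add: smooth_upto_0 smooth_upto_Suc axis_differentiable_on_def)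

lemma smooth_fun_add: "open U \<Longrightarrow> smooth_fun U f \<Longrightarrow> smooth_fun U g \<Longrightarrow> smooth_fun U (\<lambda>y. f y + g y)"
  by (simp add: smooth_fun_iff_smooth_upto smooth_upto_add)

lemma smooth_fun_mult: "open U \<Longrightarrow> smooth_fun U f \<Longrightarrow> smooth_fun U g \<Longrightarrow> smooth_fun U (\<lambda>y. f y * g y)"
  by (simp add: smooth_fun_iff_smooth_upto smooth_upto_mult)

lemma smooth_fun_const: "smooth_fun U (\<lambda>y. c)"
  by (simp add: smooth_fun_iff_smooth_upto smooth_upto_const)

lemma smooth_fun_sum:
  assumes "open U" "\<And>k. k \<in> S \<Longrightarrow> smooth_fun U (f k)"
  shows "smooth_fun U (\<lambda>y. \<Sum>k\<in>S. f k y)"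
  using assms(2)
  by (induction S rule: infinite_finite_induct) (simp_all add: smooth_fun_const smooth_fun_add assms(1))

lemma smooth_vf_const: "smooth_vf U (\<lambda>p. v)"
  unfolding smooth_vf_def by (simp add: smooth_fun_const)

lemma bilinear_axis_expansion:
  fixes h :: "real^'n::finite \<Rightarrow> real^'n \<Rightarrow> 'b::real_vector"
  assumes "bilinear h"
  shows "h x y = (\<Sum>i\<in>UNIV. \<Sum>j\<in>UNIV. (x$i * y$j) *\<^sub>R h (axis i 1) (axis j 1))"
proof -
  have "h x y = h (\<Sum>i\<in>UNIV. x$i *\<^sub>R axis i 1) (\<Sum>j\<in>UNIV. y$j *\<^sub>R axis j 1)"
    using basis_expansion[of x] basis_expansion[of y] by (simp add: scalar_mult_eq_scaleR)
  also have "\<dots> = (\<Sum>(i,j)\<in>UNIV \<times> UNIV. h (x$i *\<^sub>R axis i 1) (y$j *\<^sub>R axis j 1))"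
    by (rule bilinear_sum[OF assms])
  also have "\<dots> = (\<Sum>i\<in>UNIV. \<Sum>j\<in>UNIV. (x$i * y$j) *\<^sub>R h (axis i 1) (axis j 1))"
    by (simp add: sum.cartesian_product bilinear_lmul[OF assms] bilinear_rmul[OF assms] mult.commute)
  finally show ?thesis .
qed

lemma lie_cong_on:
  assumes "open U" "p \<in> U" "\<forall>q\<in>U. X q = X' q" "\<forall>q\<in>U. Y q = Y' q"
  shows "lie X Y p = lie X' Y' p"
proof -
  have "pderiv_fun i (\<lambda>q. X q $ k) p = pderiv_fun i (\<lambda>q. X' q $ k) p"
    "pderiv_fun i (\<lambda>q. Y q $ k) p = pderiv_fun i (\<lambda>q. Y' q $ k) p" for i k
    using assms by (auto intro!: pderiv_fun_cong_on)
  then show ?thesis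
    using assms unfolding lie_def by simp
qed

lemma lie_self [simp]: "lie X X p = 0"
  unfolding lie_def by (simp add: vec_eq_iff)

lemma lie_anticomm: "lie X Y p = - lie Y X p"
  unfolding lie_def by (simp add: vec_eq_iff sum_negf[symmetric])

lemma nijenhuis_cong_on:
  assumes "open U" "p \<in> U" "\<forall>q\<in>U. A q = B q"
  shows "nijenhuis A X Y p = nijenhuis B X Y p"
proof -
  have "lie (\<lambda>q. A q (X q)) (\<lambda>q. A q (Y q)) p = lie (\<lambda>q. B q (X q)) (\<lambda>q. B q (Y q)) p"
    "lie (\<lambda>q. A q (X q)) Y p = lie (\<lambda>q. B q (X q)) Y p"
    "lie X (\<lambda>q. A q (Y q)) p = lie X (\<lambda>q. B q (Y q)) p"
    using assms by (auto intro!: lie_cong_on)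
  then show ?thesis
    using assms unfolding nijenhuis_def Let_def by simp
qed

lemma raise_lower_eqI:
  assumes "metric U g" "p \<in> U" "\<And>y. g p v y = gt p x y"
  shows "raise_lower g gt p x = v"
  unfolding raise_lower_def
proof (rule the_equality)
  fix w
  assume w: "\<forall>y. g p w y = gt p x y"
  have "bilinear (g p)" "\<forall>u. (\<forall>y. g p u y = 0) \<longrightarrow> u = 0"
    using assms(1,2) unfolding metric_def by blast+
  moreover have "g p (w - v) y = 0" for y
    using w assms(3) bilinear_lsub[OF \<open>bilinear (g p)\<close>] by simp
  ultimately show "w = v" by (metis right_minus_eq)
qed (use assms(3) in blast)

text \<open>Variables are named after the brackets they stand for, with \<open>A = E \<cdot> (-)\<close>:
  \<open>ax_y = [AX, Y]\<close>, \<open>e_x = [E, X]\<close>, etc.; \<open>c \<cdot> y\<close> stands for \<open>L\<^sub>E(\<circ>)(E, Y)\<close>.\<close>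

lemma nijenhuis_cancellation:
  fixes mul :: "'a::real_vector \<Rightarrow> 'a \<Rightarrow> 'a" (infixl "\<cdot>" 70)
  assumes bil: "bilinear (\<cdot>)" and comm: "\<And>a b. a \<cdot> b = b \<cdot> a"
    and assoc: "\<And>a b d. a \<cdot> b \<cdot> d = a \<cdot> (b \<cdot> d)"
    and F: "ax_ay - ax_e \<cdot> y - E \<cdot> ax_y = E \<cdot> (x_ay - x_e \<cdot> y - E \<cdot> x_y) + x \<cdot> (c \<cdot> y)"
    and ax_e: "ax_e = - (c \<cdot> x + E \<cdot> e_x)" and x_e: "x_e = - e_x"
  shows "- ax_ay + E \<cdot> (ax_y + x_ay) - E \<cdot> (E \<cdot> x_y) = 0"
proof -
  have "x \<cdot> (c \<cdot> y) = c \<cdot> x \<cdot> y" "E \<cdot> e_x \<cdot> y = E \<cdot> (e_x \<cdot> y)"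
    using assoc comm by metis+
  then show ?thesis
    using F unfolding ax_e x_e
    by (simp add: bilinear_radd[OF bil] bilinear_rsub[OF bil] bilinear_ladd[OF bil]
        bilinear_lsub[OF bil] bilinear_lneg[OF bil] bilinear_rneg[OF bil] algebra_simps)
qed

locale F_manifold_chart =
  fixes U :: "(real^'n::finite) set" and m :: "'n mult" and e :: "real^'n \<Rightarrow> real^'n"
  assumes F_manifold: "F_manifold U m e"
begin

lemma open_U: "open U"
  using F_manifold unfolding F_manifold_def by blast

lemma smooth_unit: "smooth_vf U e"
  using F_manifold unfolding F_manifold_def by blast

lemma smooth_structure_constants: "smooth_vf U (\<lambda>p. m p (axis i 1) (axis j 1))"
  using F_manifold unfolding F_manifold_def by blast

lemma bilinear_mult: "p \<in> U \<Longrightarrow> bilinear (m p)"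
  using F_manifold unfolding F_manifold_def by blast

lemma mult_commute: "p \<in> U \<Longrightarrow> m p x y = m p y x"
  using F_manifold unfolding F_manifold_def by blast

lemma mult_assoc: "p \<in> U \<Longrightarrow> m p (m p x y) z = m p x (m p y z)"
  using F_manifold unfolding F_manifold_def by blast

lemma mult_unit: "p \<in> U \<Longrightarrow> m p (e p) x = x"
  using F_manifold unfolding F_manifold_def by blast

lemma lie_mult_vmul:
  "smooth_vf U X \<Longrightarrow> smooth_vf U Y \<Longrightarrow> smooth_vf U Z \<Longrightarrow> smooth_vf U W \<Longrightarrow> p \<in> U \<Longrightarrow>
    lie_mult m (vmul m X Y) Z W p = m p (X p) (lie_mult m Y Z W p) + m p (Y p) (lie_mult m X Z W p)"
  using F_manifold unfolding F_manifold_def by blast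

lemma mult_inverse_cancel:
  assumes "p \<in> U" "m p c d = e p"
  shows "m p d (m p c x) = x" "m p c (m p d x) = x"
  using assms mult_assoc mult_commute mult_unit by metis+

lemma smooth_vf_vmul:
  assumes "smooth_vf U X" "smooth_vf U Y"
  shows "smooth_vf U (vmul m X Y)"
  unfolding smooth_vf_def
proof
  fix k
  have "smooth_fun U (\<lambda>p. \<Sum>i\<in>UNIV. \<Sum>j\<in>UNIV. X p $ i * Y p $ j * m p (axis i 1) (axis j 1) $ k)"
    using assms smooth_structure_constants
    by (auto simp: smooth_vf_def open_U intro!: smooth_fun_sum smooth_fun_mult)
  moreover have "\<forall>p\<in>U. (\<Sum>i\<in>UNIV. \<Sum>j\<in>UNIV. X p $ i * Y p $ j * m p (axis i 1) (axis j 1) $ k)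
      = vmul m X Y p $ k"
    by (simp add: vmul_def bilinear_axis_expansion[OF bilinear_mult] sum_component)
  ultimately show "smooth_fun U (\<lambda>p. vmul m X Y p $ k)"
    by (rule smooth_fun_cong[OF open_U, rotated])
qed

lemma lie_mult_unit:
  assumes "smooth_vf U Z" "smooth_vf U W" "p \<in> U"
  shows "lie_mult m e Z W p = 0"
proof -
  have "lie (vmul m e e) V p = lie e V p" for V
    using mult_unit by (intro lie_cong_on[OF open_U assms(3)]) (auto simp: vmul_def)
  then have "lie_mult m (vmul m e e) Z W p = lie_mult m e Z W p"
    unfolding lie_mult_def by (simp add: vmul_def)
  then have "lie_mult m e Z W p = lie_mult m e Z W p + lie_mult m e Z W p"
    using lie_mult_vmul[OF smooth_unit smooth_unit assms] by (simp add: mult_unit assms(3))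
  then show ?thesis by simp
qed

lemma metric_mult_twist:
  assumes inv: "invariant_metric U m gt" and C: "smooth_vf U C" and D: "\<forall>p\<in>U. m p (D p) (C p) = e p"
  shows "metric U (\<lambda>p x y. gt p (m p (C p) x) y)"
  unfolding metric_def
proof (intro conjI allI ballI impI)
  have gt_metric: "metric U gt"
    using inv unfolding invariant_metric_def by blast
  fix i j
  have "smooth_vf U (vmul m C (\<lambda>_. axis i 1))"
    by (rule smooth_vf_vmul[OF C smooth_vf_const])
  then have "smooth_fun U (\<lambda>p. \<Sum>r\<in>UNIV. \<Sum>s\<in>UNIV.
      (vmul m C (\<lambda>_. axis i 1) p $ r * axis j 1 $ s) * gt p (axis r 1) (axis s 1))"
    using gt_metric unfolding smooth_vf_def metric_def
    by (auto intro!: smooth_fun_sum smooth_fun_mult open_U smooth_fun_const)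
  moreover have "\<forall>p\<in>U. (\<Sum>r\<in>UNIV. \<Sum>s\<in>UNIV.
      (vmul m C (\<lambda>_. axis i 1) p $ r * axis j 1 $ s) * gt p (axis r 1) (axis s 1))
      = gt p (m p (C p) (axis i 1)) (axis j 1)"
    using gt_metric unfolding metric_def by (simp add: vmul_def bilinear_axis_expansion[of "gt _"])
  ultimately show "smooth_fun U (\<lambda>p. gt p (m p (C p) (axis i 1)) (axis j 1))"
    by (rule smooth_fun_cong[OF open_U, rotated])
next
  fix p
  assume p: "p \<in> U"
  have gtp: "bilinear (gt p)" "\<And>x y. gt p x y = gt p y x" "\<And>x. \<forall>y. gt p x y = 0 \<Longrightarrow> x = 0"
    "\<And>x y z. gt p (m p x y) z = gt p x (m p y z)"
    using inv p unfolding invariant_metric_def metric_def by blast+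
  have "linear (\<lambda>x. gt p (m p (C p) x) y)" for y
    using linear_compose[of "m p (C p)" "\<lambda>z. gt p z y"] bilinear_mult[OF p] gtp(1)
    unfolding bilinear_def o_def by blast
  then show "bilinear (\<lambda>x y. gt p (m p (C p) x) y)"
    using gtp(1) unfolding bilinear_def by blast
  show "gt p (m p (C p) x) y = gt p (m p (C p) y) x" for x y
    using gtp(2,4) mult_commute[OF p] by metis
  fix x
  assume "\<forall>y. gt p (m p (C p) x) y = 0"
  then have "m p (C p) x = 0"
    using gtp(3) by blast
  then show "x = 0"
    using mult_inverse_cancel(2)[OF p D[rule_format, OF p]] bilinear_rzero[OF bilinear_mult[OF p]]
    by metis
qed

lemma lie_mult_eventual_identity:
  assumes ev: "eventual_identity U m e E" and p: "p \<in> U"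
  obtains c where "\<And>W. smooth_vf U W \<Longrightarrow> lie_mult m E E W p = m p c (W p)"
proof -
  obtain Ei where Ei: "\<forall>p\<in>U. m p (E p) (Ei p) = e p"
    and F_star: "F_manifold U (\<lambda>p x y. m p (m p x y) (Ei p)) E"
    using ev unfolding eventual_identity_def by blast
  have E: "smooth_vf U E"
    using ev unfolding eventual_identity_def by blast
  define star where "star = (\<lambda>p x y. m p (m p x y) (Ei p))"
  interpret star: F_manifold_chart U star E
    using F_star unfolding star_def by unfold_locales
  define EE where "EE = vmul m E E"
  have star_EE: "star q (EE q) v = m q (E q) v" if "q \<in> U" for q v
    unfolding star_def EE_def vmul_def using Ei that mult_assoc mult_commute mult_unit by metis
  show thesis
  proof
    fix W
    assume W: "smooth_vf U W"
    have "lie E (vmul star EE W) p = lie E (vmul m E W) p"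
      using star_EE by (intro lie_cong_on[OF open_U p]) (auto simp: vmul_def)
    moreover have "lie_mult star E EE W p = 0"
      using star.lie_mult_unit[OF smooth_vf_vmul[OF E E] W p] unfolding EE_def .
    moreover have "star p (lie E EE p) (W p) = m p (m p (lie E EE p) (Ei p)) (W p)"
      unfolding star_def using p mult_assoc mult_commute by metis
    ultimately show "lie_mult m E E W p = m p (m p (lie E EE p) (Ei p)) (W p)"
      unfolding lie_mult_def
      by (simp add: vmul_def star_EE p bilinear_lzero[OF bilinear_mult[OF p]] algebra_simps)
  qed
qed

lemma nijenhuis_mult_eventual_identity:
  assumes ev: "eventual_identity U m e E" and X: "smooth_vf U X" and Y: "smooth_vf U Y" and p: "p \<in> U"
  shows "nijenhuis (\<lambda>q. m q (E q)) X Y p = 0"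
proof -
  have E: "smooth_vf U E"
    using ev unfolding eventual_identity_def by blast
  obtain c where c: "\<And>W. smooth_vf U W \<Longrightarrow> lie_mult m E E W p = m p c (W p)"
    using lie_mult_eventual_identity[OF ev p] by blast
  have "lie E (vmul m E X) p = m p c (X p) + m p (E p) (lie E X p)"
    using c[OF X] unfolding lie_mult_def
    by (simp add: vmul_def bilinear_lzero[OF bilinear_mult[OF p]] diff_eq_eq)
  then have AXE: "lie (vmul m E X) E p = - (m p c (X p) + m p (E p) (lie E X p))"
    by (subst lie_anticomm) simp
  have F: "lie (vmul m E X) (vmul m E Y) p - m p (lie (vmul m E X) E p) (Y p)
      - m p (E p) (lie (vmul m E X) Y p)
    = m p (E p) (lie X (vmul m E Y) p - m p (lie X E p) (Y p) - m p (E p) (lie X Y p))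
      + m p (X p) (m p c (Y p))"
    using lie_mult_vmul[OF E X E Y p, unfolded c[OF Y]] unfolding lie_mult_def vmul_def .
  show ?thesis
    using nijenhuis_cancellation[OF bilinear_mult[OF p] mult_commute[OF p] mult_assoc[OF p]
        F AXE lie_anticomm]
    unfolding nijenhuis_def Let_def vmul_def by simp
qed

end

theorem proposition3p3:
  fixes U :: "(real^'n::finite) set"
    and m :: "'n mult"
    and e E Einv :: "real^'n \<Rightarrow> real^'n"
    and gt :: "real^'n \<Rightarrow> real^'n \<Rightarrow> real^'n \<Rightarrow> real"
  assumes F: "F_manifold U m e"
    and inv: "invariant_metric U m gt"
    and ev: "eventual_identity U m e E"
    and Einv_smooth: "smooth_vf U Einv"
    and Einv: "\<forall>p\<in>U. m p (E p) (Einv p) = e p"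
  shows "metric U (\<lambda>p x y. gt p (m p (Einv p) x) y)
    \<and> (\<forall>p\<in>U. \<forall>x. raise_lower (\<lambda>p x y. gt p (m p (Einv p) x) y) gt p x = m p (E p) x)
    \<and> (\<forall>X Y. smooth_vf U X \<longrightarrow> smooth_vf U Y \<longrightarrow>
         (\<forall>p\<in>U. nijenhuis (raise_lower (\<lambda>p x y. gt p (m p (Einv p) x) y) gt) X Y p = 0))"
proof -
  interpret F_manifold_chart U m e
    by (fact F_manifold_chart.intro[OF F])
  define g where "g = (\<lambda>p x y. gt p (m p (Einv p) x) y)"
  have g: "metric U g"
    unfolding g_def by (rule metric_mult_twist[OF inv Einv_smooth Einv])
  have A: "raise_lower g gt p x = m p (E p) x" if p: "p \<in> U" for p x
  proof (rule raise_lower_eqI[OF g p])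
    show "g p (m p (E p) x) y = gt p x y" for y
      unfolding g_def using mult_inverse_cancel(1)[OF p] Einv p by metis
  qed
  have "nijenhuis (raise_lower g gt) X Y p = 0"
    if "smooth_vf U X" "smooth_vf U Y" "p \<in> U" for X Y p
    using nijenhuis_cong_on[OF open_U \<open>p \<in> U\<close>, of "raise_lower g gt" "\<lambda>q. m q (E q)"] A
      nijenhuis_mult_eventual_identity[OF ev that] by (simp add: fun_eq_iff)
  then show ?thesis
    using g A unfolding g_def by blast
qed

end
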